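(* There exist an S4 theorem $A$ and an LP formula $B$ such that $A$ has no prehistoric-cycle-free G3s proof, $B^\circ = A$, and $\mathrm{LP}(\mathrm{CS}^\odot)\vdash B$. Specifically, one may take $A := \Box(P\land\lnot\Box P\to P)\to\lnot\Box(P\land\lnot\Box P)$ and $B := y{:}(P\land\lnot (y\cdot x){:}P\to P)\to\lnot x{:}(P\land\lnot (y\cdot x){:}P)$, for an atom $P$ and distinct variables $x,y$.
   Context: LP terms: $t ::= c \mid x \mid t_0\cdot t_1 \mid t_0+t_1 \mid\ !t$; LP formulas: $A ::= \bot \mid P \mid A_0\to A_1 \mid t{:}A$; $\lnot A := A\to\bot$, $\land$ a classical abbreviation. LP: axioms A0 (classical propositional schemes), A1 $t{:}F\to F$, A2 $s{:}(F\to G)\to(t{:}F\to(s\cdot t){:}G)$, A3 $t{:}F\to\ !t{:}(t{:}F)$, A4 $s{:}F\to(s+t){:}F$, $t{:}F\to(s+t){:}F$; rules modus ponens and axiom necessitation ($A\vdash c{:}A$ for $A$ an axiom, $c$ a constant). A constant specification CS is a set of formulas $c{:}A$ with $c$ a constant and $A$ an axiom; LP(CS) restricts axiom necessitation to members of CS. CS is self-referential if there are $c_0{:}A_0,\dots,c_{n-1}{:}A_{n-1}\in\mathrm{CS}$ ($n\ge1$) with $c_{(k+1)\bmod n}$ occurring in $A_k$ for all $k$. $\mathrm{LP}(\mathrm{CS}^\odot)\vdash B$ means $\mathrm{LP}(\mathrm{CS})\vdash B$ for some non-self-referential CS. Forgetful projection: $(t{:}A)^\circ=\Box A^\circ$,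 commuting with $\to$, atoms, $\bot$. G3s is the cut-free sequent calculus for S4 with rules (Ax) $P,\Gamma\supset\Delta,P$; $(\bot\supset)$; $(\to\supset)$; $(\supset\to)$; $(\Box\supset)$ from $A,\Box A,\Gamma\supset\Delta$ infer $\Box A,\Gamma\supset\Delta$; $(\supset\Box)$ from $\Box\Gamma\supset A$ infer $\Gamma',\Box\Gamma\supset\Delta',\Box A$ (plus standard rules for $\lnot,\land$ if these are primitive). Families are equivalence classes of $\Box$-occurrences under correspondence (side-formula occurrences correspond from premise to conclusion; active formulas correspond to their topmost occurrence as subformula of the principal formula, symbolwise; closed reflexively, symmetrically, transitively). $i\prec j$ if some $(\supset\Box)$ rule whose principal $\Box A$ has outermost $\Box$ in family $j$ has a premise containing a $\Box$ of family $i$; a G3s proof is prehistoric-cycle-free if there is no $i_0\prec\cdots\prec i_{n-1}\prec i_0$ ($n\ge1$). A G3s proof of $A$ means a proof of the sequent $\supset A$. *)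

theory Defs
  imports Main
begin

datatype mform = MBot | MAt nat | MImp mform mform | MBox mform

definition mnot :: "mform \<Rightarrow> mform" where "mnot A = MImp A MBot"
definition mand :: "mform \<Rightarrow> mform \<Rightarrow> mform" where
  "mand A B = mnot (MImp A (mnot B))"

inductive s4_thm :: "mform \<Rightarrow> bool" where
  s4_k: "s4_thm (MImp A (MImp B A))"
| s4_s: "s4_thm (MImp (MImp A (MImp B C)) (MImp (MImp A B) (MImp A C)))"
| s4_dn: "s4_thm (MImp (mnot (mnot A)) A)"
| s4_K: "s4_thm (MImp (MBox (MImp A B)) (MImp (MBox A) (MBox B)))"
| s4_T: "s4_thm (MImp (MBox A) A)"
| s4_4: "s4_thm (MImp (MBox A) (MBox (MBox A)))"
| s4_mp: "s4_thm (MImp A B) \<Longrightarrow> s4_thm A \<Longrightarrow> s4_thm B"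
| s4_nec: "s4_thm A \<Longrightarrow> s4_thm (MBox A)"

datatype lpterm = Cn nat | Vr nat | App lpterm lpterm | Plus lpterm lpterm | Bang lpterm

datatype lpf = LBot | LAt nat | LImp lpf lpf | LJ lpterm lpf

definition lnot :: "lpf \<Rightarrow> lpf" where "lnot A = LImp A LBot"
definition land :: "lpf \<Rightarrow> lpf \<Rightarrow> lpf" where
  "land A B = lnot (LImp A (lnot B))"

fun consts_t :: "lpterm \<Rightarrow> nat set" where
  "consts_t (Cn c) = {c}"
| "consts_t (Vr x) = {}"
| "consts_t (App s t) = consts_t s \<union> consts_t t"
| "consts_t (Plus s t) = consts_t s \<union> consts_t t"
| "consts_t (Bang t) = consts_t t"

fun consts_f :: "lpf \<Rightarrow> nat set" where
  "consts_f LBot = {}"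
| "consts_f (LAt p) = {}"
| "consts_f (LImp A B) = consts_f A \<union> consts_f B"
| "consts_f (LJ t A) = consts_t t \<union> consts_f A"

inductive lp_axiom :: "lpf \<Rightarrow> bool" where
  ax_k: "lp_axiom (LImp A (LImp B A))"
| ax_s: "lp_axiom (LImp (LImp A (LImp B C)) (LImp (LImp A B) (LImp A C)))"
| ax_dn: "lp_axiom (LImp (lnot (lnot A)) A)"
| ax_A1: "lp_axiom (LImp (LJ t F) F)"
| ax_A2: "lp_axiom (LImp (LJ s (LImp F G)) (LImp (LJ t F) (LJ (App s t) G)))"
| ax_A3: "lp_axiom (LImp (LJ t F) (LJ (Bang t) (LJ t F)))"
| ax_A4a: "lp_axiom (LImp (LJ s F) (LJ (Plus s t) F))"
| ax_A4b: "lp_axiom (LImp (LJ t F) (LJ (Plus s t) F))"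

text \<open>A constant specification is a set of pairs (c, A), standing for c:A, with A an axiom.\<close>
definition const_spec :: "(nat \<times> lpf) set \<Rightarrow> bool" where
  "const_spec CS \<longleftrightarrow> (\<forall>(c, A) \<in> CS. lp_axiom A)"

definition self_referential :: "(nat \<times> lpf) set \<Rightarrow> bool" where
  "self_referential CS \<longleftrightarrow>
     (\<exists>n::nat. \<exists>f :: nat \<Rightarrow> nat \<times> lpf. n \<ge> 1 \<and> (\<forall>k<n. f k \<in> CS) \<and>
        (\<forall>k<n. fst (f ((k + 1) mod n)) \<in> consts_f (snd (f k))))"

inductive lp_deriv :: "(nat \<times> lpf) set \<Rightarrow> lpf \<Rightarrow> bool" for CS where
  lp_ax: "lp_axiom A \<Longrightarrow> lp_deriv CS A"
| lp_an: "(c, A) \<in> CS \<Longrightarrow> lp_deriv CS (LJ (Cn c) A)"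
| lp_mp: "lp_deriv CS (LImp A B) \<Longrightarrow> lp_deriv CS A \<Longrightarrow> lp_deriv CS B"

text \<open>LP(CS-odot) derivability: derivable in LP(CS) for some non-self-referential CS.\<close>
definition lp_nsr_deriv :: "lpf \<Rightarrow> bool" where
  "lp_nsr_deriv B \<longleftrightarrow> (\<exists>CS. const_spec CS \<and> \<not> self_referential CS \<and> lp_deriv CS B)"

fun forget :: "lpf \<Rightarrow> mform" where
  "forget LBot = MBot"
| "forget (LAt p) = MAt p"
| "forget (LImp A B) = MImp (forget A) (forget B)"
| "forget (LJ t A) = MBox (forget A)"

type_synonym sequent = "mform list \<times> mform list"

text \<open>Rules; the nat arguments are positions of principal formulas in the lists.
  RBoxR ks j: principal box at succedent j; the boxed antecedent formulas at
  (distinct) positions ks are kept (in this order) in the premise.\<close>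
datatype rule = RAx nat nat | RBotL nat | RImpL nat | RImpR nat | RBoxL nat
  | RBoxR "nat list" nat

datatype ptree = Node sequent rule "ptree list"

fun root :: "ptree \<Rightarrow> sequent" where "root (Node s r ts) = s"

definition del :: "nat \<Rightarrow> 'a list \<Rightarrow> 'a list" where
  "del i xs = take i xs @ drop (Suc i) xs"

fun is_box :: "mform \<Rightarrow> bool" where
  "is_box (MBox A) = True" | "is_box _ = False"

fun rule_prems :: "sequent \<Rightarrow> rule \<Rightarrow> sequent list option" where
  "rule_prems (G, D) (RAx i j) =
     (if i < length G \<and> j < length D \<and> (\<exists>p. G ! i = MAt p \<and> D ! j = MAt p)
      then Some [] else None)"
| "rule_prems (G, D) (RBotL i) =
     (if i < length G \<and> G ! i = MBot then Some [] else None)"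
| "rule_prems (G, D) (RImpL i) =
     (if i < length G then (case G ! i of
         MImp A B \<Rightarrow> Some [(del i G, A # D), (B # del i G, D)]
       | _ \<Rightarrow> None) else None)"
| "rule_prems (G, D) (RImpR j) =
     (if j < length D then (case D ! j of
         MImp A B \<Rightarrow> Some [(A # G, B # del j D)]
       | _ \<Rightarrow> None) else None)"
| "rule_prems (G, D) (RBoxL i) =
     (if i < length G then (case G ! i of
         MBox A \<Rightarrow> Some [(A # G, D)]
       | _ \<Rightarrow> None) else None)"
| "rule_prems (G, D) (RBoxR ks j) =
     (if j < length D \<and> distinct ks \<and> (\<forall>k\<in>set ks. k < length G \<and> is_box (G ! k))
      then (case D ! j of
         MBox A \<Rightarrow> Some [(map (\<lambda>k. G ! k) ks, [A])]
       | _ \<Rightarrow> None) else None)"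

inductive g3s_valid :: "ptree \<Rightarrow> bool" where
  "rule_prems s r = Some (map root ts) \<Longrightarrow> (\<forall>t \<in> set ts. g3s_valid t)
     \<Longrightarrow> g3s_valid (Node s r ts)"

definition g3s_proof_of :: "ptree \<Rightarrow> mform \<Rightarrow> bool" where
  "g3s_proof_of T A \<longleftrightarrow> g3s_valid T \<and> root T = ([], [A])"

fun subtree :: "ptree \<Rightarrow> nat list \<Rightarrow> ptree option" where
  "subtree t [] = Some t"
| "subtree (Node s r ts) (k # p) = (if k < length ts then subtree (ts ! k) p else None)"

fun subf :: "mform \<Rightarrow> nat list \<Rightarrow> mform option" where
  "subf A [] = Some A"
| "subf (MImp A B) (k # p) = (if k = 0 then subf A p else if k = 1 then subf B p else None)"
| "subf (MBox A) (k # p) = (if k = 0 then subf A p else None)"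
| "subf _ (k # p) = None"

text \<open>A formula occurrence in a sequent: side (True = antecedent, False = succedent)
  and index.  A box occurrence in a proof: (node path, side, index, position).\<close>
type_synonym occ = "nat list \<times> bool \<times> nat \<times> nat list"

definition fml_at :: "sequent \<Rightarrow> bool \<Rightarrow> nat \<Rightarrow> mform option" where
  "fml_at s b n = (let xs = (if b then fst s else snd s) in
                     if n < length xs then Some (xs ! n) else None)"

definition box_occs :: "ptree \<Rightarrow> occ set" where
  "box_occs T = {(\<pi>, b, n, p). \<exists>s r ts A C. subtree T \<pi> = Some (Node s r ts)
        \<and> fml_at s b n = Some A \<and> subf A p = Some (MBox C)}"

definition skip :: "nat \<Rightarrow> nat \<Rightarrow> nat" where
  "skip i k = (if k < i then k else Suc k)"

text \<open>Correspondence map: formula at side b, index n of premise number k of a rule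
  application corresponds to the subformula at position pre of the conclusion
  formula at side b', index n' (pre = [] for side formulas; for active formulas,
  pre locates them inside the principal formula).\<close>
fun cmap :: "rule \<Rightarrow> nat \<Rightarrow> bool \<Rightarrow> nat \<Rightarrow> (bool \<times> nat \<times> nat list) option" where
  "cmap (RImpL i) 0 True n = Some (True, skip i n, [])"
| "cmap (RImpL i) 0 False n = (if n = 0 then Some (True, i, [0]) else Some (False, n - 1, []))"
| "cmap (RImpL i) (Suc 0) True n = (if n = 0 then Some (True, i, [1]) else Some (True, skip i (n - 1), []))"
| "cmap (RImpL i) (Suc 0) False n = Some (False, n, [])"
| "cmap (RImpR j) 0 True n = (if n = 0 then Some (False, j, [0]) else Some (True, n - 1, []))"
| "cmap (RImpR j) 0 False n = (if n = 0 then Some (False, j, [1]) else Some (False, skip j (n - 1), []))"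
| "cmap (RBoxL i) 0 True n = (if n = 0 then Some (True, i, [0]) else Some (True, n - 1, []))"
| "cmap (RBoxL i) 0 False n = Some (False, n, [])"
| "cmap (RBoxR ks j) 0 True n = (if n < length ks then Some (True, ks ! n, []) else None)"
| "cmap (RBoxR ks j) 0 False n = (if n = 0 then Some (False, j, [0]) else None)"
| "cmap _ _ _ _ = None"

definition corr :: "ptree \<Rightarrow> occ rel" where
  "corr T = {((\<pi> @ [k], b, n, p), (\<pi>, b', n', pre @ p)) | \<pi> k b n p b' n' pre s r ts.
      (\<pi> @ [k], b, n, p) \<in> box_occs T \<and> subtree T \<pi> = Some (Node s r ts)
      \<and> cmap r k b n = Some (b', n', pre)}"

definition fam_rel :: "ptree \<Rightarrow> occ rel" where
  "fam_rel T = (corr T \<union> (corr T)\<inverse> \<union> Id_on (box_occs T))\<^sup>*"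

definition family :: "ptree \<Rightarrow> occ \<Rightarrow> occ set" where
  "family T oc = fam_rel T `` {oc}"

definition families :: "ptree \<Rightarrow> occ set set" where
  "families T = family T ` box_occs T"

text \<open>i \<prec> j: some (\<supset>Box) rule whose principal box (outermost box) is in family j has a
  premise containing a box occurrence of family i.\<close>
definition prehist :: "ptree \<Rightarrow> occ set rel" where
  "prehist T = {(family T oc, family T (\<pi>, False, j, [])) | oc \<pi> j ks s ts.
      subtree T \<pi> = Some (Node s (RBoxR ks j) ts) \<and> oc \<in> box_occs T
      \<and> fst oc = \<pi> @ [0]}"

definition prehistoric_cycle_free :: "ptree \<Rightarrow> bool" where
  "prehistoric_cycle_free T \<longleftrightarrow> acyclic (prehist T)"

definition P_m :: mform where "P_m = MAt 0"
definition A_ex :: mform where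
  "A_ex = MImp (MBox (MImp (mand P_m (mnot (MBox P_m))) P_m))
               (mnot (MBox (mand P_m (mnot (MBox P_m)))))"

definition P_l :: lpf where "P_l = LAt 0"
definition x_v :: lpterm where "x_v = Vr 0"
definition y_v :: lpterm where "y_v = Vr 1"
definition B_ex :: lpf where
  "B_ex = LImp (LJ y_v (LImp (land P_l (lnot (LJ (App y_v x_v) P_l))) P_l))
               (lnot (LJ x_v (land P_l (lnot (LJ (App y_v x_v) P_l)))))"

end

theory Submission
  imports Defs
begin

text \<open>
  \<open>A_ex\<close> is an S4 theorem because it is the forgetful projection of \<open>B_ex\<close>, which LP derives
  from A1, A2 and propositional reasoning alone, i.e.\ with the empty constant specification.

  For the other half, take the frame whose worlds are the booleans, with \<open>w\<close> seeing \<open>u\<close> iff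
  \<open>w \<longrightarrow> u\<close>; let \<open>P\<close> hold only at \<open>False\<close>, and interpret the single formula \<open>\<box>Y\<close>,
  \<open>Y = P \<and> \<not>\<box>P\<close>, non-standardly as true exactly at \<open>False\<close>. Then \<open>A_ex\<close> fails at \<open>False\<close>,
  and all G3s rules preserve truth except a (\<open>\<supset>\<box>\<close>) step with \<open>\<box>Y\<close> as principal or context
  formula, because this \<open>\<box>Y\<close> is reflexive but not persistent. In a G3s proof of \<open>A_ex\<close>,
  however, every positive box traces back to the \<open>\<box>P\<close> in the consequent \<open>\<not>\<box>Y\<close>; this holds
  for the principal box of every (\<open>\<supset>\<box>\<close>) step and for the \<open>\<box>P\<close> inside an antecedent \<open>\<box>Y\<close>
  alike. So a (\<open>\<supset>\<box>\<close>) step with \<open>\<box>Y\<close> in its premise is a prehistoric loop \<open>i \<prec> i\<close>.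
\<close>

section \<open>Hilbert calculi and the forgetful projection\<close>


locale hilbert_KS =
  fixes imp :: "'f \<Rightarrow> 'f \<Rightarrow> 'f" and prov :: "'f \<Rightarrow> bool"
  assumes K: "prov (imp A (imp B A))"
    and S: "prov (imp (imp A (imp B C)) (imp (imp A B) (imp A C)))"
    and MP: "prov (imp A B) \<Longrightarrow> prov A \<Longrightarrow> prov B"
begin

lemma imp_refl: "prov (imp A A)"
  using MP[OF MP[OF S K] K] .

lemma imp_trans:
  assumes "prov (imp A B)" and "prov (imp B C)"
  shows "prov (imp A C)"
  using MP[OF MP[OF S MP[OF K assms(2)]] assms(1)] .

lemma imp_swap:
  assumes "prov (imp A (imp B C))"
  shows "prov (imp B (imp A C))"
  using imp_trans[OF K MP[OF S assms]] .

lemma imp_mp_formula: "prov (imp A (imp (imp A B) B))"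
  using imp_swap[OF imp_refl] .

lemma imp_contrapos:
  assumes "prov (imp A B)"
  shows "prov (imp (imp B C) (imp A C))"
  using imp_swap[OF imp_trans[OF assms imp_mp_formula]] .

end

interpretation s4: hilbert_KS MImp s4_thm
  by unfold_locales (fact s4_k s4_s s4_mp)+

interpretation lp: hilbert_KS LImp "lp_deriv CS" for CS
  by unfold_locales (fact lp_ax[OF ax_k] lp_ax[OF ax_s] lp_mp)+

lemma forget_lnot [simp]: "forget (lnot A) = mnot (forget A)"
  by (simp add: lnot_def mnot_def)

lemma s4_thm_forget_lp_axiom: "lp_axiom A \<Longrightarrow> s4_thm (forget A)"
  by (induction rule: lp_axiom.induct) (auto intro: s4_thm.intros s4.imp_refl)

theorem s4_thm_forget:
  assumes "const_spec CS" and "lp_deriv CS B"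
  shows "s4_thm (forget B)"
  using assms(2)
proof induction
  case (lp_an c A)
  then have "lp_axiom A"
    using assms(1) unfolding const_spec_def by blast
  then show ?case
    by (simp add: s4_nec s4_thm_forget_lp_axiom)
qed (auto intro: s4_thm_forget_lp_axiom s4_mp)

lemma lp_deriv_B_ex: "lp_deriv {} B_ex"
proof -
  define R where "R = LJ (App y_v x_v) P_l"
  define Y where "Y = land P_l (lnot R)"
  define U where "U = LJ y_v (LImp Y P_l)"
  define V where "V = LJ x_v Y"
  have "lp_deriv {} (LImp R (LImp P_l (lnot (lnot R))))"
    using lp.imp_trans[OF lp.imp_mp_formula lp_ax[OF ax_k]] unfolding lnot_def .
  then have "lp_deriv {} (LImp Y (lnot R))"
    using lp.imp_contrapos unfolding Y_def land_def lnot_def by blast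
  then have "lp_deriv {} (LImp V (lnot R))"
    using lp.imp_trans[OF lp_ax[OF ax_A1]] unfolding V_def by blast
  then have "lp_deriv {} (LImp (LImp V R) (lnot V))"
    using lp_mp[OF lp_ax[OF ax_s]] unfolding lnot_def by blast
  moreover have "lp_deriv {} (LImp U (LImp V R))"
    unfolding U_def V_def R_def by (rule lp_ax[OF ax_A2])
  ultimately show ?thesis
    using lp.imp_trans unfolding B_ex_def U_def V_def Y_def R_def by blast
qed

lemma not_self_referential_empty: "\<not> self_referential {}"
  unfolding self_referential_def by force

lemma lp_nsr_deriv_B_ex: "lp_nsr_deriv B_ex"
  using lp_deriv_B_ex not_self_referential_empty
  by (auto simp: lp_nsr_deriv_def const_spec_def)

lemma forget_B_ex: "forget B_ex = A_ex"
  by (simp add: B_ex_def A_ex_def land_def lnot_def mand_def mnot_def P_l_def P_m_def)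

lemma s4_thm_A_ex: "s4_thm A_ex"
  using s4_thm_forget[OF _ lp_deriv_B_ex] forget_B_ex by (simp add: const_spec_def)

section \<open>Tracing box occurrences to the root\<close>

fun negative_at :: "mform \<Rightarrow> nat list \<Rightarrow> bool" where
  "negative_at A [] = False"
| "negative_at (MImp A B) (k # p) = (if k = 0 then \<not> negative_at A p else negative_at B p)"
| "negative_at (MBox A) (k # p) = negative_at A p"
| "negative_at _ (k # p) = False"

lemma subf_append:
  "subf A p = Some B \<Longrightarrow> subf A (p @ q) = subf B q"
  by (induction A p rule: subf.induct) (auto split: if_splits)

lemma negative_at_append:
  "subf A p = Some B \<Longrightarrow> negative_at A (p @ q) = (negative_at A p \<noteq> negative_at B q)"
  by (induction A p rule: subf.induct) (auto split: if_splits)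

lemma nth_del: "n < length (del i xs) \<Longrightarrow> del i xs ! n = xs ! skip i n"
  by (auto simp: del_def skip_def nth_append min_def)

lemma skip_less_length: "n < length (del i xs) \<Longrightarrow> skip i n < length xs"
  by (auto simp: del_def skip_def)

lemma set_del_subset: "set (del i xs) \<subseteq> set xs"
  unfolding del_def using set_drop_subset set_take_subset by fastforce

text \<open>If \<open>c = Some (b', n', pre)\<close>, then \<open>F\<close> occurs at position \<open>pre\<close> of the formula with index
  \<open>n'\<close> on side \<open>b'\<close> of \<open>s\<close>, on the same signed side \<open>b\<close> (a negative position flips the side).\<close>

definition ancestor_in :: "sequent \<Rightarrow> bool \<Rightarrow> mform \<Rightarrow> (bool \<times> nat \<times> nat list) option \<Rightarrow> bool" where
  "ancestor_in s b F c \<longleftrightarrow> (\<exists>b' n' pre H. c = Some (b', n', pre) \<and> fml_at s b' n' = Some H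
     \<and> subf H pre = Some F \<and> (b' \<noteq> negative_at H pre) = b)"

lemma ancestor_in_cmap_RImpL:
  assumes "i < length G" "G ! i = MImp A B" "k < 2"
    and "fml_at ([(del i G, A # D), (B # del i G, D)] ! k) b n = Some F"
  shows "ancestor_in (G, D) b F (cmap (RImpL i) k b n)"
  using assms unfolding ancestor_in_def
  by (cases k; cases b; cases n)
     (simp_all add: fml_at_def Let_def nth_del skip_less_length ex_bool_eq split: if_splits)

lemma ancestor_in_cmap_RImpR:
  assumes "j < length D" "D ! j = MImp A B" and "fml_at (A # G, B # del j D) b n = Some F"
  shows "ancestor_in (G, D) b F (cmap (RImpR j) 0 b n)"
  using assms unfolding ancestor_in_def
  by (cases b; cases n)
     (simp_all add: fml_at_def Let_def nth_del skip_less_length ex_bool_eq split: if_splits)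

lemma ancestor_in_cmap_RBoxL:
  assumes "i < length G" "G ! i = MBox A" and "fml_at (A # G, D) b n = Some F"
  shows "ancestor_in (G, D) b F (cmap (RBoxL i) 0 b n)"
  using assms unfolding ancestor_in_def
  by (cases b; cases n) (simp_all add: fml_at_def Let_def ex_bool_eq split: if_splits)

lemma ancestor_in_cmap_RBoxR:
  assumes "j < length D" "D ! j = MBox A" "\<forall>k\<in>set ks. k < length G"
    and "fml_at (map (\<lambda>k. G ! k) ks, [A]) b n = Some F"
  shows "ancestor_in (G, D) b F (cmap (RBoxR ks j) 0 b n)"
  using assms unfolding ancestor_in_def
  by (cases b) (simp_all add: fml_at_def Let_def ex_bool_eq split: if_splits)

lemma ancestor_in_cmap:
  assumes "rule_prems s r = Some ps" "k < length ps" "fml_at (ps ! k) b n = Some F"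
  shows "ancestor_in s b F (cmap r k b n)"
proof -
  obtain G D where s: "s = (G, D)" by (cases s)
  show ?thesis
  proof (cases r)
    case (RImpL i)
    then obtain A B where "i < length G" "G ! i = MImp A B"
      and "ps = [(del i G, A # D), (B # del i G, D)]"
      using assms(1) s by (auto split: if_splits mform.splits)
    then show ?thesis using assms(2,3) ancestor_in_cmap_RImpL[of i G A B k D b n F] s RImpL by simp
  next
    case (RImpR j)
    then obtain A B where "j < length D" "D ! j = MImp A B" and "ps = [(A # G, B # del j D)]"
      using assms(1) s by (auto split: if_splits mform.splits)
    then show ?thesis using assms(2,3) ancestor_in_cmap_RImpR[of j D A B G b n F] s RImpR by simp
  next
    case (RBoxL i)
    then obtain A where "i < length G" "G ! i = MBox A" and "ps = [(A # G, D)]"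
      using assms(1) s by (auto split: if_splits mform.splits)
    then show ?thesis using assms(2,3) ancestor_in_cmap_RBoxL[of i G A D b n F] s RBoxL by simp
  next
    case (RBoxR ks j)
    then obtain A where "j < length D" "D ! j = MBox A" "\<forall>k\<in>set ks. k < length G"
      and "ps = [(map (\<lambda>k. G ! k) ks, [A])]"
      using assms(1) s by (auto split: if_splits mform.splits)
    then show ?thesis using assms(2,3) ancestor_in_cmap_RBoxR[of j D A ks G b n F] s RBoxR by simp
  qed (use assms s in \<open>auto split: if_splits\<close>)
qed

lemma subtree_snoc:
  "subtree t (\<pi> @ [k]) = (case subtree t \<pi> of None \<Rightarrow> None
     | Some (Node s r ts) \<Rightarrow> if k < length ts then Some (ts ! k) else None)"
proof (induction \<pi> arbitrary: t)
  case Nil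
  then show ?case by (cases t) auto
next
  case (Cons a \<pi>)
  then show ?case by (cases t) auto
qed

lemma g3s_valid_rule_prems: "g3s_valid (Node s r ts) \<Longrightarrow> rule_prems s r = Some (map root ts)"
  by (auto elim: g3s_valid.cases)

lemma g3s_valid_subtree: "g3s_valid T \<Longrightarrow> subtree T \<pi> = Some N \<Longrightarrow> g3s_valid N"
proof (induction T \<pi> rule: subtree.induct)
  case (2 s r ts k p)
  then show ?case by (auto elim: g3s_valid.cases split: if_splits)
qed simp

lemma box_occ_traces_to_root:
  assumes "g3s_valid T"
  shows "subtree T \<pi> = Some (Node s r ts) \<Longrightarrow> fml_at s b n = Some F \<Longrightarrow> subf F p = Some (MBox C)
    \<Longrightarrow> \<exists>b' n' G p'. ((\<pi>, b, n, p), ([], b', n', p')) \<in> (corr T)\<^sup>*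
        \<and> fml_at (root T) b' n' = Some G \<and> subf G p' = Some (MBox C)
        \<and> (b' \<noteq> negative_at G p') = (b \<noteq> negative_at F p)"
proof (induction \<pi> arbitrary: s r ts b n F p rule: rev_induct)
  case (snoc k \<pi>)
  from snoc.prems(1) obtain s0 r0 ts0 where st0: "subtree T \<pi> = Some (Node s0 r0 ts0)"
    and k: "k < length ts0" and tk: "ts0 ! k = Node s r ts"
    by (auto simp: subtree_snoc split: option.splits ptree.splits if_splits)
  have "rule_prems s0 r0 = Some (map root ts0)"
    using g3s_valid_rule_prems g3s_valid_subtree[OF assms st0] by blast
  then have "ancestor_in s0 b F (cmap r0 k b n)"
    using ancestor_in_cmap[of s0 r0 _ k b n F] k tk snoc.prems(2) by simp
  then obtain b' n' pre G where cm: "cmap r0 k b n = Some (b', n', pre)"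
    and G: "fml_at s0 b' n' = Some G" "subf G pre = Some F" "(b' \<noteq> negative_at G pre) = b"
    unfolding ancestor_in_def by blast
  have "subf G (pre @ p) = Some (MBox C)"
    using subf_append[OF G(2)] snoc.prems(3) by simp
  then obtain b'' n'' H p'' where IH: "((\<pi>, b', n', pre @ p), ([], b'', n'', p'')) \<in> (corr T)\<^sup>*"
    "fml_at (root T) b'' n'' = Some H" "subf H p'' = Some (MBox C)"
    "(b'' \<noteq> negative_at H p'') = (b' \<noteq> negative_at G (pre @ p))"
    using snoc.IH[OF st0 G(1)] by blast
  have "(\<pi> @ [k], b, n, p) \<in> box_occs T"
    unfolding box_occs_def using snoc.prems by blast
  then have "((\<pi> @ [k], b, n, p), (\<pi>, b', n', pre @ p)) \<in> corr T"
    unfolding corr_def using st0 cm by blast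
  then have "((\<pi> @ [k], b, n, p), ([], b'', n'', p'')) \<in> (corr T)\<^sup>*"
    using IH(1) by (rule converse_rtrancl_into_rtrancl)
  moreover have "(b'' \<noteq> negative_at H p'') = (b \<noteq> negative_at F p)"
    using IH(4) negative_at_append[OF G(2), of p] G(3) by blast
  ultimately show ?case
    using IH(2,3) by blast
qed auto

lemma family_eq_if_corr_to_same:
  assumes "(x, z) \<in> (corr T)\<^sup>*" and "(y, z) \<in> (corr T)\<^sup>*"
  shows "family T x = family T y"
proof -
  have sym: "sym (fam_rel T)"
    unfolding fam_rel_def by (intro sym_rtrancl) (auto simp: sym_def)
  have trans: "trans (fam_rel T)"
    unfolding fam_rel_def by (rule trans_rtrancl)
  have "(corr T)\<^sup>* \<subseteq> fam_rel T"
    unfolding fam_rel_def by (intro rtrancl_mono) blast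
  then have "(x, z) \<in> fam_rel T" "(z, y) \<in> fam_rel T"
    using assms symD[OF sym] by blast+
  then have "(x, y) \<in> fam_rel T" "(y, x) \<in> fam_rel T"
    using transD[OF trans] symD[OF sym] by blast+
  then show ?thesis
    unfolding family_def using transD[OF trans] by blast
qed

section \<open>A countermodel for proofs avoiding \<open>\<box>Y\<close>\<close>

definition Y_m :: mform where "Y_m = mand P_m (mnot (MBox P_m))"

fun holds :: "bool \<Rightarrow> mform \<Rightarrow> bool" where
  "holds w MBot = False"
| "holds w (MAt n) = (\<not> w)"
| "holds w (MImp A B) = (holds w A \<longrightarrow> holds w B)"
| "holds w (MBox A) = (if A = Y_m then \<not> w else (\<forall>u. (w \<longrightarrow> u) \<longrightarrow> holds u A))"

definition holds_seq :: "bool \<Rightarrow> sequent \<Rightarrow> bool" where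
  "holds_seq w s \<longleftrightarrow> (\<forall>A\<in>set (fst s). holds w A) \<longrightarrow> (\<exists>B\<in>set (snd s). holds w B)"

lemma holds_box_reflexive: "holds w (MBox A) \<Longrightarrow> holds w A"
  by (cases w) (auto simp: Y_m_def mand_def mnot_def P_m_def split: if_splits)

lemma holds_box_persistent:
  "A \<noteq> Y_m \<Longrightarrow> holds w (MBox A) \<Longrightarrow> (w \<longrightarrow> u) \<Longrightarrow> holds u (MBox A)"
  by auto

lemma not_holds_A_ex: "\<not> holds False A_ex"
  by (auto simp: A_ex_def Y_m_def mand_def mnot_def P_m_def)

definition boxR_avoids :: "mform \<Rightarrow> ptree \<Rightarrow> bool" where
  "boxR_avoids X T \<longleftrightarrow> (\<forall>\<pi> G D ks j ts. subtree T \<pi> = Some (Node (G, D) (RBoxR ks j) ts) \<longrightarrow>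
      D ! j \<noteq> X \<and> (\<forall>k\<in>set ks. G ! k \<noteq> X))"

lemma boxR_avoids_child:
  assumes "boxR_avoids X (Node s r ts)" and "t \<in> set ts"
  shows "boxR_avoids X t"
proof -
  obtain k where "k < length ts" "ts ! k = t"
    using assms(2) by (auto simp: in_set_conv_nth)
  then have "subtree (Node s r ts) (k # \<pi>) = subtree t \<pi>" for \<pi>
    by simp
  then show ?thesis
    using assms(1) unfolding boxR_avoids_def by metis
qed

lemma holds_seq_RImpR:
  assumes "rule_prems (G, D) (RImpR j) = Some ps" and "\<forall>p\<in>set ps. holds_seq w p"
  shows "holds_seq w (G, D)"
proof -
  obtain A B where "j < length D" "D ! j = MImp A B" and ps: "ps = [(A # G, B # del j D)]"
    using assms(1) by (auto split: if_splits mform.splits)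
  then have AB: "MImp A B \<in> set D"
    by (metis nth_mem)
  have prem: "holds_seq w (A # G, B # del j D)"
    using assms(2) ps by auto
  show ?thesis
    unfolding holds_seq_def fst_conv snd_conv
  proof
    assume "\<forall>C\<in>set G. holds w C"
    then have "holds w A \<longrightarrow> holds w B \<or> (\<exists>C\<in>set (del j D). holds w C)"
      using prem by (simp add: holds_seq_def)
    then have "holds w (MImp A B) \<or> (\<exists>C\<in>set D. holds w C)"
      using set_del_subset[of j D] by auto
    then show "\<exists>C\<in>set D. holds w C"
      using AB by blast
  qed
qed

lemma holds_seq_RBoxL:
  assumes "rule_prems (G, D) (RBoxL i) = Some ps" and "\<forall>p\<in>set ps. holds_seq w p"
  shows "holds_seq w (G, D)"
proof -
  obtain A where "i < length G" "G ! i = MBox A" and ps: "ps = [(A # G, D)]"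
    using assms(1) by (auto split: if_splits mform.splits)
  then have BA: "MBox A \<in> set G"
    by (metis nth_mem)
  have prem: "holds_seq w (A # G, D)"
    using assms(2) ps by auto
  show ?thesis
    unfolding holds_seq_def fst_conv snd_conv
  proof
    assume G: "\<forall>C\<in>set G. holds w C"
    then have "holds w A"
      using BA holds_box_reflexive by blast
    then show "\<exists>C\<in>set D. holds w C"
      using prem G by (simp add: holds_seq_def)
  qed
qed

lemma holds_seq_RBoxR:
  assumes "rule_prems (G, D) (RBoxR ks j) = Some ps" and "\<forall>p\<in>set ps. \<forall>u. holds_seq u p"
    and "D ! j \<noteq> MBox Y_m" and "\<forall>k\<in>set ks. G ! k \<noteq> MBox Y_m"
  shows "holds_seq w (G, D)"
proof -
  obtain A where j: "j < length D" "D ! j = MBox A"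
    and ks: "\<forall>k\<in>set ks. k < length G \<and> is_box (G ! k)"
    and ps: "ps = [(map (\<lambda>k. G ! k) ks, [A])]"
    using assms(1) by (auto split: if_splits mform.splits)
  have "holds w (MBox A)" if G: "\<forall>C\<in>set G. holds w C"
  proof -
    have "holds u A" if "w \<longrightarrow> u" for u
    proof -
      have "holds u (G ! k)" if "k \<in> set ks" for k
      proof -
        obtain C where C: "G ! k = MBox C"
          using ks \<open>k \<in> set ks\<close> by (cases "G ! k") auto
        moreover have "holds w (MBox C)"
          using G ks C \<open>k \<in> set ks\<close> by (metis nth_mem)
        moreover have "C \<noteq> Y_m"
          using assms(4) C \<open>k \<in> set ks\<close> by auto
        ultimately show ?thesis
          using holds_box_persistent \<open>w \<longrightarrow> u\<close> by metis
      qed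
      then show ?thesis
        using assms(2) ps by (auto simp: holds_seq_def)
    qed
    then show ?thesis
      using assms(3) j by auto
  qed
  then show ?thesis
    unfolding holds_seq_def fst_conv snd_conv using j by (metis nth_mem)
qed

lemma holds_seq_rule:
  assumes "rule_prems (G, D) r = Some ps" and "\<forall>p\<in>set ps. \<forall>u. holds_seq u p"
    and "\<And>ks j. r = RBoxR ks j \<Longrightarrow> D ! j \<noteq> MBox Y_m \<and> (\<forall>k\<in>set ks. G ! k \<noteq> MBox Y_m)"
  shows "holds_seq w (G, D)"
proof (cases r)
  case (RAx i j)
  then obtain p where "i < length G" "G ! i = MAt p" "j < length D" "D ! j = MAt p"
    using assms(1) by (auto split: if_splits)
  then have "MAt p \<in> set G" "MAt p \<in> set D"
    by (metis nth_mem)+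
  then show ?thesis
    by (force simp: holds_seq_def)
next
  case (RBotL i)
  then have "i < length G" "G ! i = MBot"
    using assms(1) by (auto split: if_splits)
  then have "MBot \<in> set G"
    by (metis nth_mem)
  then show ?thesis
    by (force simp: holds_seq_def)
next
  case (RImpL i)
  then obtain A B where "i < length G" "G ! i = MImp A B"
    and ps: "ps = [(del i G, A # D), (B # del i G, D)]"
    using assms(1) by (auto split: if_splits mform.splits)
  then have "MImp A B \<in> set G"
    by (metis nth_mem)
  moreover have "holds_seq w (del i G, A # D)" "holds_seq w (B # del i G, D)"
    using assms(2) ps by auto
  ultimately show ?thesis
    using set_del_subset[of i G] by (auto simp: holds_seq_def)
next
  case (RImpR j)
  with assms(1,2) show ?thesis
    using holds_seq_RImpR[of G D j ps w] by simp
next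
  case (RBoxL i)
  with assms(1,2) show ?thesis
    using holds_seq_RBoxL[of G D i ps w] by simp
next
  case (RBoxR ks j)
  with assms show ?thesis
    using holds_seq_RBoxR[of G D ks j ps w] by simp
qed

lemma holds_seq_root:
  "g3s_valid T \<Longrightarrow> boxR_avoids (MBox Y_m) T \<Longrightarrow> holds_seq w (root T)"
proof (induction T arbitrary: w rule: g3s_valid.induct)
  case (1 s r ts)
  obtain G D where s: "s = (G, D)" by (cases s)
  have "\<forall>p\<in>set (map root ts). \<forall>u. holds_seq u p"
    using 1(2) boxR_avoids_child[OF 1(3)] by auto
  moreover have "D ! j \<noteq> MBox Y_m \<and> (\<forall>k\<in>set ks. G ! k \<noteq> MBox Y_m)" if "r = RBoxR ks j" for ks j
    using 1(3) that s unfolding boxR_avoids_def by (metis subtree.simps(1))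
  ultimately show ?case
    using holds_seq_rule 1(1) s by simp
qed

section \<open>Cycle-free G3s proofs of \<open>A_ex\<close>\<close>

fun box_positions :: "mform \<Rightarrow> nat list list" where
  "box_positions MBot = []"
| "box_positions (MAt _) = []"
| "box_positions (MImp A B) = map ((#) 0) (box_positions A) @ map ((#) 1) (box_positions B)"
| "box_positions (MBox A) = [] # map ((#) 0) (box_positions A)"

lemma box_positions_complete: "subf A p = Some (MBox C) \<Longrightarrow> p \<in> set (box_positions A)"
  by (induction A p rule: subf.induct) (auto split: if_splits)

text \<open>The position of the \<open>\<box>P\<close> in the consequent \<open>\<not>\<box>(P \<and> \<not>\<box>P)\<close> of \<open>A_ex\<close>.\<close>

definition boxP_pos :: "nat list" where "boxP_pos = [1, 0, 0, 0, 1, 0, 0]"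

lemma positive_box_A_ex:
  assumes "subf A_ex p = Some (MBox C)" and "\<not> negative_at A_ex p"
  shows "p = boxP_pos \<and> C = P_m"
proof -
  have "p \<in> set (box_positions A_ex)"
    using box_positions_complete[OF assms(1)] .
  then show ?thesis
    using assms by (auto simp: A_ex_def mand_def mnot_def P_m_def boxP_pos_def)
qed

lemma positive_box_traces_to_boxP:
  assumes "g3s_proof_of T A_ex" and "subtree T \<pi> = Some (Node s r ts)"
    and "fml_at s b n = Some F" "subf F p = Some (MBox C)" "b = negative_at F p"
  shows "((\<pi>, b, n, p), ([], False, 0, boxP_pos)) \<in> (corr T)\<^sup>* \<and> C = P_m"
proof -
  have T: "g3s_valid T" "root T = ([], [A_ex])"
    using assms(1) by (auto simp: g3s_proof_of_def)
  obtain b' n' G p' where tr: "((\<pi>, b, n, p), ([], b', n', p')) \<in> (corr T)\<^sup>*"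
    "fml_at (root T) b' n' = Some G" "subf G p' = Some (MBox C)"
    "(b' \<noteq> negative_at G p') = (b \<noteq> negative_at F p)"
    using box_occ_traces_to_root[OF T(1) assms(2-4)] by blast
  then have "b' = False" "n' = 0" "G = A_ex"
    using T(2) by (auto simp: fml_at_def split: if_splits)
  then show ?thesis
    using tr positive_box_A_ex[of p' C] assms(5) by auto
qed

lemma cycle_free_boxR_avoids_box_Y:
  assumes T: "g3s_proof_of T A_ex" and acyclic: "prehistoric_cycle_free T"
  shows "boxR_avoids (MBox Y_m) T"
  unfolding boxR_avoids_def
proof (intro allI impI conjI)
  fix \<pi> G D ks j ts
  assume st: "subtree T \<pi> = Some (Node (G, D) (RBoxR ks j) ts)"
  have "g3s_valid (Node (G, D) (RBoxR ks j) ts)"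
    using T g3s_valid_subtree[OF _ st] by (simp add: g3s_proof_of_def)
  then have "rule_prems (G, D) (RBoxR ks j) = Some (map root ts)"
    by (rule g3s_valid_rule_prems)
  then obtain A t0 where j: "j < length D" "D ! j = MBox A"
    and ts: "ts = [t0]" "root t0 = (map (\<lambda>k. G ! k) ks, [A])"
    by (cases ts) (auto split: if_splits mform.splits)
  have "fml_at (G, D) False j = Some (MBox A)"
    using j by (simp add: fml_at_def)
  from positive_box_traces_to_boxP[OF T st this, of "[]" A]
  have principal: "((\<pi>, False, j, []), ([], False, 0, boxP_pos)) \<in> (corr T)\<^sup>*" "A = P_m"
    by simp_all
  then show "D ! j \<noteq> MBox Y_m"
    using j by (simp add: Y_m_def P_m_def mand_def mnot_def)
  show "\<forall>k\<in>set ks. G ! k \<noteq> MBox Y_m"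
  proof (intro ballI notI)
    fix k assume "k \<in> set ks" and Y: "G ! k = MBox Y_m"
    then obtain n where n: "n < length ks" "ks ! n = k"
      by (auto simp: in_set_conv_nth)
    obtain s1 r1 ts1 where t0: "t0 = Node s1 r1 ts1"
      by (cases t0)
    have st0: "subtree T (\<pi> @ [0]) = Some (Node s1 r1 ts1)"
      using st ts t0 by (simp add: subtree_snoc)
    have Y_at: "fml_at s1 True n = Some (MBox Y_m)"
      using ts t0 n Y by (auto simp: fml_at_def)
    \<comment> \<open>\<open>\<box>P\<close> is negative in the antecedent \<open>\<box>Y\<close>, i.e. on the succedent side, like the principal box.\<close>
    have boxP: "subf (MBox Y_m) [0, 0, 1, 0, 0] = Some (MBox P_m)"
      "negative_at (MBox Y_m) [0, 0, 1, 0, 0]"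
      by (auto simp: Y_m_def mand_def mnot_def)
    have occ: "(\<pi> @ [0], True, n, [0, 0, 1, 0, 0]) \<in> box_occs T"
      unfolding box_occs_def using st0 Y_at boxP(1) by blast
    have "((\<pi> @ [0], True, n, [0, 0, 1, 0, 0]), ([], False, 0, boxP_pos)) \<in> (corr T)\<^sup>*"
      using positive_box_traces_to_boxP[OF T st0 Y_at boxP(1)] boxP(2) by auto
    then have "family T (\<pi> @ [0], True, n, [0, 0, 1, 0, 0]) = family T (\<pi>, False, j, [])"
      using family_eq_if_corr_to_same principal(1) by blast
    moreover have "(family T (\<pi> @ [0], True, n, [0, 0, 1, 0, 0]), family T (\<pi>, False, j, []))
        \<in> prehist T"
      unfolding prehist_def using st occ by fastforce
    ultimately show False
      using acyclic unfolding prehistoric_cycle_free_def acyclic_def by auto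
  qed
qed

lemma no_cycle_free_g3s_proof_A_ex: "\<not> (\<exists>T. g3s_proof_of T A_ex \<and> prehistoric_cycle_free T)"
proof
  assume "\<exists>T. g3s_proof_of T A_ex \<and> prehistoric_cycle_free T"
  then obtain T where "g3s_proof_of T A_ex" "prehistoric_cycle_free T"
    by blast
  then have "holds_seq False ([], [A_ex])"
    using holds_seq_root[of T False] cycle_free_boxR_avoids_box_Y
    by (simp add: g3s_proof_of_def)
  then show False
    using not_holds_A_ex by (simp add: holds_seq_def)
qed

theorem mainTheorem11:
  shows "\<exists>A B. s4_thm A \<and> \<not> (\<exists>T. g3s_proof_of T A \<and> prehistoric_cycle_free T)
           \<and> forget B = A \<and> lp_nsr_deriv B \<and> A = A_ex \<and> B = B_ex"
  using s4_thm_A_ex no_cycle_free_g3s_proof_A_ex forget_B_ex lp_nsr_deriv_B_ex by blast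

end
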